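(* Let $\psi$ be an Orlicz function satisfying the $\Delta^2$-Condition and let $a>1$. Then there exist $C>0$ and $x_1>0$ such that $\psi^{-1}(x^a)\le C\,\psi^{-1}(x)$ for all $x\ge x_1$. Consequently, for any $\alpha>-1$, $N\ge1$ and any holomorphic $\phi:\mathbb{B}_N\to\mathbb{B}_N$, $$\lim_{|z|\to1}\frac{\psi^{-1}\big(1/(1-|\phi(z)|)^{N+\alpha+1}\big)}{\psi^{-1}\big(1/(1-|z|)^{N+\alpha+1}\big)}=0\iff\lim_{|z|\to1}\frac{\psi^{-1}\big(1/(1-|\phi(z)|)\big)}{\psi^{-1}\big(1/(1-|z|)\big)}=0.$$
   Context: An Orlicz function is a strictly convex $\psi:[0,\infty)\to[0,\infty)$ with $\psi(0)=0$, continuous at $0$, and $\psi(x)/x\to\infty$; $\psi^{-1}$ denotes its inverse. $\psi$ satisfies the $\Delta^2$-Condition if there exist $C>0$, $x_0>0$ with $\psi(x)^2\le\psi(Cx)$ for all $x\ge x_0$. $\mathbb{B}_N$ is the open unit ball of $\mathbb{C}^N$. *)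

theory Defs
  imports "HOL-Analysis.Analysis"
begin

definition strictly_convex_on :: "real set \<Rightarrow> (real \<Rightarrow> real) \<Rightarrow> bool" where
  "strictly_convex_on S f \<longleftrightarrow> convex S \<and>
     (\<forall>x\<in>S. \<forall>y\<in>S. \<forall>t. x \<noteq> y \<and> 0 < t \<and> t < 1 \<longrightarrow>
        f ((1 - t) * x + t * y) < (1 - t) * f x + t * f y)"

text \<open>Orlicz function psi on [0,inf) (values on negative reals are irrelevant).\<close>
definition orlicz_function :: "(real \<Rightarrow> real) \<Rightarrow> bool" where
  "orlicz_function psi \<longleftrightarrow>
     (\<forall>x\<ge>0. psi x \<ge> 0) \<and>
     strictly_convex_on {0..} psi \<and>
     psi 0 = 0 \<and>
     continuous (at 0 within {0..}) psi \<and>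
     filterlim (\<lambda>x. psi x / x) at_top at_top"

definition orlicz_inv :: "(real \<Rightarrow> real) \<Rightarrow> real \<Rightarrow> real" where
  "orlicz_inv psi y = (THE x. x \<ge> 0 \<and> psi x = y)"

definition delta2_condition :: "(real \<Rightarrow> real) \<Rightarrow> bool" where
  "delta2_condition psi \<longleftrightarrow>
     (\<exists>C>0. \<exists>x0>0. \<forall>x\<ge>x0. (psi x)\<^sup>2 \<le> psi (C * x))"

text \<open>Holomorphic maps between open subsets of C^N, with C^N modelled as complex ^ 'n:
  real Frechet differentiable at every point with complex-linear derivative.\<close>
definition holomorphic_vec_on :: "(complex ^ 'n \<Rightarrow> complex ^ 'm) \<Rightarrow> (complex ^ 'n) set \<Rightarrow> bool" where
  "holomorphic_vec_on f S \<longleftrightarrow>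
     (\<forall>z\<in>S. \<exists>D. (f has_derivative D) (at z) \<and>
        (\<forall>v. D (\<chi> i. \<i> * v $ i) = (\<chi> j. \<i> * D v $ j)))"

end

theory Submission imports Defs begin

(* Proof idea.
   (1) From strict convexity and psi 0 = 0, an Orlicz function is positive and strictly
       increasing on [0,inf), continuous, and unbounded; hence orlicz_inv psi is a genuine
       increasing inverse on [0,inf) that tends to infinity, characterised by
       orlicz_inv psi y <= x  <->  y <= psi x.
   (2) Iterating the Delta^2 inequality gives psi x ^ (2^k) <= psi (C^k * x) for large x.
       Choosing 2^k >= a and inverting yields the growth estimate
       orlicz_inv psi (x powr a) <= C^k * orlicz_inv psi x  (part one of the theorem).
   (3) For any filter F, functions u >= 1 and v -> infinity, and b > 1, this growth estimate
       makes  I(u)/I(v)  and  I(u^b)/I(v^b)  comparable up to a constant factor and an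
       additive term I(x1^b)/I(v) -> 0 (I = orlicz_inv psi), so one ratio tends to 0 iff
       the other does.
   (4) The theorem follows with b = N + alpha + 1 > 1, u = 1/(1-|phi z|), v = 1/(1-|z|)
       and F the filter |z| -> 1. *)

section \<open>Elementary properties of Orlicz functions\<close>

lemma orlicz_below_chord:
  assumes o: "orlicz_function psi" and "y > 0" "0 < t" "t < 1"
  shows "psi (t * y) < t * psi y"
proof -
  have sc: "strictly_convex_on {0..} psi" and "psi 0 = 0"
    using o unfolding orlicz_function_def by auto
  have "psi ((1 - t) * 0 + t * y) < (1 - t) * psi 0 + t * psi y"
    using sc[unfolded strictly_convex_on_def, THEN conjunct2, rule_format, of 0 y t] assms by simp
  then show ?thesis using \<open>psi 0 = 0\<close> by simp
qed

lemma orlicz_nonneg: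
  assumes "orlicz_function psi" "0 \<le> x" shows "0 \<le> psi x"
  using assms unfolding orlicz_function_def by auto

text \<open>Positivity and strict monotonicity on [0,inf) follow from the chord estimate.\<close>
lemma orlicz_pos:
  assumes o: "orlicz_function psi" and "y > 0" shows "psi y > 0"
proof -
  have "psi ((1/2) * y) < (1/2) * psi y" by (rule orlicz_below_chord) (use o assms in auto)
  moreover have "0 \<le> psi ((1/2) * y)" using orlicz_nonneg[OF o] assms(2) by simp
  ultimately show ?thesis by linarith
qed

lemma orlicz_strict_mono:
  assumes o: "orlicz_function psi" and "0 \<le> x" "x < y" shows "psi x < psi y"
proof (cases "x = 0")
  case True
  then show ?thesis using orlicz_pos[OF o] assms o unfolding orlicz_function_def by auto
next
  case False
  define t where "t = x / y"
  have t: "0 < t" "t < 1" "t * y = x" using False assms by (auto simp: t_def)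
  have "psi x < t * psi y" using orlicz_below_chord[OF o _ t(1,2), of y] t(3) assms by simp
  also have "\<dots> < psi y" using t orlicz_pos[OF o, of y] assms by simp
  finally show ?thesis .
qed

lemma orlicz_le_iff:
  assumes o: "orlicz_function psi" and "0 \<le> x" "0 \<le> y" shows "psi x \<le> psi y \<longleftrightarrow> x \<le> y"
  using orlicz_strict_mono[OF o, of x y] orlicz_strict_mono[OF o, of y x] assms
  by (cases x y rule: linorder_cases) auto

text \<open>A convex function is continuous in the interior; at 0 continuity is assumed.\<close>
lemma orlicz_continuous:
  assumes o: "orlicz_function psi" shows "continuous_on {0..} psi"
proof -
  have sc: "strictly_convex_on {0..} psi" and c0: "continuous (at 0 within {0..}) psi"
    using o unfolding orlicz_function_def by auto
  have "convex_on {0<..} psi"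
  proof (rule convex_onI)
    fix t x y :: real assume h: "t > 0" "t < 1" "x \<in> {0<..}" "y \<in> {0<..}"
    show "psi ((1 - t) *\<^sub>R x + t *\<^sub>R y) \<le> (1 - t) * psi x + t * psi y"
    proof (cases "x = y")
      case True then show ?thesis by (simp add: algebra_simps)
    next
      case False then show ?thesis using sc h unfolding strictly_convex_on_def
        by (auto intro!: less_imp_le)
    qed
  qed (simp add: convex_real_interval)
  then have "continuous_on {0<..} psi" by (intro convex_on_continuous) auto
  then have interior: "isCont psi x" if "x > 0" for x
    using that by (simp add: continuous_on_eq_continuous_at)
  show ?thesis unfolding continuous_on_eq_continuous_within
  proof
    fix x :: real assume "x \<in> {0..}"
    then consider "x = 0" | "x > 0" by fastforce
    then show "continuous (at x within {0..}) psi"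
      by cases (use c0 interior continuous_at_imp_continuous_at_within in auto)
  qed
qed

text \<open>Superlinear growth makes psi unbounded, so every level y is attained.\<close>
lemma orlicz_unbounded:
  assumes "orlicz_function psi" shows "\<exists>M\<ge>0. y \<le> psi M"
proof -
  have "filterlim (\<lambda>x. psi x / x) at_top at_top" using assms unfolding orlicz_function_def by auto
  then obtain N where N: "\<And>x. x \<ge> N \<Longrightarrow> 1 \<le> psi x / x"
    unfolding filterlim_at_top eventually_at_top_linorder by blast
  define x where "x = max N (max 1 y)"
  have "N \<le> x" by (simp add: x_def)
  then have "1 \<le> psi x / x" by (rule N)
  moreover have "1 \<le> x" "y \<le> x" by (auto simp: x_def)
  ultimately have "x \<le> psi x" by (simp add: field_simps)
  then show ?thesis using \<open>1 \<le> x\<close> \<open>y \<le> x\<close> by (intro exI[of _ x]) auto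
qed

section \<open>The inverse Orlicz function\<close>

text \<open>By the intermediate value theorem and strict monotonicity, orlicz_inv psi is a
  genuine inverse of psi on [0,inf).\<close>
lemma orlicz_inv:
  assumes o: "orlicz_function psi" and "0 \<le> y"
  shows "0 \<le> orlicz_inv psi y" "psi (orlicz_inv psi y) = y"
proof -
  obtain M where M: "M \<ge> 0" "y \<le> psi M" using orlicz_unbounded[OF o] by blast
  have "psi 0 = 0" using o unfolding orlicz_function_def by auto
  moreover have "continuous_on {0..M} psi"
    using orlicz_continuous[OF o] by (rule continuous_on_subset) auto
  ultimately obtain x where x: "0 \<le> x" "psi x = y" using IVT'[of psi 0 y M] M assms by auto
  have "\<exists>!x. 0 \<le> x \<and> psi x = y"
  proof (rule ex1I[of _ x])
    fix z assume "0 \<le> z \<and> psi z = y"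
    then show "z = x" using x orlicz_le_iff[OF o, of z x] orlicz_le_iff[OF o, of x z] by auto
  qed (use x in auto)
  then have "0 \<le> orlicz_inv psi y \<and> psi (orlicz_inv psi y) = y"
    unfolding orlicz_inv_def by (rule theI')
  then show "0 \<le> orlicz_inv psi y" "psi (orlicz_inv psi y) = y" by auto
qed

lemma orlicz_inv_le_iff:
  assumes o: "orlicz_function psi" and "0 \<le> y" "0 \<le> x"
  shows "orlicz_inv psi y \<le> x \<longleftrightarrow> y \<le> psi x"
  using orlicz_le_iff[OF o orlicz_inv(1)[OF o assms(2)] assms(3)] orlicz_inv(2)[OF o assms(2)]
  by simp

lemma orlicz_inv_mono:
  assumes o: "orlicz_function psi" and "0 \<le> y1" "y1 \<le> y2"
  shows "orlicz_inv psi y1 \<le> orlicz_inv psi y2"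
  using orlicz_inv_le_iff[OF o assms(2) orlicz_inv(1)[OF o]] orlicz_inv(2)[OF o] assms by simp

lemma orlicz_inv_pos:
  assumes o: "orlicz_function psi" and "0 < y" shows "0 < orlicz_inv psi y"
proof -
  have "0 \<le> orlicz_inv psi y" "psi (orlicz_inv psi y) = y" using orlicz_inv[OF o] assms by auto
  moreover have "psi 0 = 0" using o unfolding orlicz_function_def by auto
  ultimately show ?thesis using assms by (cases "orlicz_inv psi y = 0") auto
qed

lemma orlicz_inv_at_top:
  assumes o: "orlicz_function psi" shows "filterlim (orlicz_inv psi) at_top at_top"
  unfolding filterlim_at_top
proof
  fix Z :: real
  show "eventually (\<lambda>y. Z \<le> orlicz_inv psi y) at_top"
    using eventually_ge_at_top[of "psi (max Z 0)"]
  proof eventually_elim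
    case (elim y)
    have "0 \<le> psi (max Z 0)" using orlicz_nonneg[OF o] by simp
    then have "max Z 0 \<le> orlicz_inv psi y"
      using orlicz_inv[OF o, of y] orlicz_le_iff[OF o, of "max Z 0" "orlicz_inv psi y"] elim
      by auto
    then show ?case by simp
  qed
qed

section \<open>Power growth of the inverse under the Delta-2 condition\<close>

definition inv_power_growth :: "(real \<Rightarrow> real) \<Rightarrow> real \<Rightarrow> bool" where
  "inv_power_growth psi b \<longleftrightarrow>
     (\<exists>C>0. \<exists>x1>0. \<forall>x\<ge>x1. orlicz_inv psi (x powr b) \<le> C * orlicz_inv psi x)"

text \<open>The Delta-2 constant may be taken at least 1, since psi is increasing.\<close>
lemma delta2_const_ge_1:
  assumes o: "orlicz_function psi" and "delta2_condition psi"
  obtains C x0 where "1 \<le> C" "0 < x0" "\<And>x. x0 \<le> x \<Longrightarrow> (psi x)\<^sup>2 \<le> psi (C * x)"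
proof -
  obtain C0 x0 where C0: "C0 > 0" "x0 > 0" "\<And>x. x0 \<le> x \<Longrightarrow> (psi x)\<^sup>2 \<le> psi (C0 * x)"
    using assms(2) unfolding delta2_condition_def by auto
  have "(psi x)\<^sup>2 \<le> psi (max C0 1 * x)" if "x0 \<le> x" for x
  proof -
    have "C0 * x \<le> max C0 1 * x" using that C0 by (intro mult_right_mono) auto
    then have "psi (C0 * x) \<le> psi (max C0 1 * x)"
      using orlicz_le_iff[OF o, of "C0 * x" "max C0 1 * x"] that C0 by simp
    then show ?thesis using C0(3)[OF that] by linarith
  qed
  then show ?thesis using that[of "max C0 1" x0] C0 by auto
qed

lemma delta2_iterate:
  assumes o: "orlicz_function psi" and C: "1 \<le> C" and x0: "0 \<le> x0"
    and D: "\<And>x. x0 \<le> x \<Longrightarrow> (psi x)\<^sup>2 \<le> psi (C * x)" and x: "x0 \<le> x"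
  shows "psi x ^ (2 ^ k) \<le> psi (C ^ k * x)"
proof (induction k)
  case 0 show ?case by simp
next
  case (Suc k)
  have "x \<le> C ^ k * x" using x x0 C by (simp add: mult_le_cancel_right1 one_le_power)
  then have large: "x0 \<le> C ^ k * x" using x by linarith
  have "psi x ^ (2 ^ Suc k) = (psi x ^ (2 ^ k))\<^sup>2" by (simp add: power_mult[symmetric] mult.commute)
  also have "\<dots> \<le> (psi (C ^ k * x))\<^sup>2"
    using Suc.IH orlicz_nonneg[OF o] x x0 by (intro power_mono) auto
  also have "\<dots> \<le> psi (C ^ Suc k * x)" using D[OF large] by (simp add: mult.assoc)
  finally show ?case .
qed

lemma delta2_inv_power_growth:
  assumes o: "orlicz_function psi" and d: "delta2_condition psi" and a: "a > 1"
  shows "inv_power_growth psi a"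
proof -
  obtain C x0 where C: "1 \<le> C" "0 < x0" and D: "\<And>x. x0 \<le> x \<Longrightarrow> (psi x)\<^sup>2 \<le> psi (C * x)"
    using delta2_const_ge_1[OF o d] by blast
  obtain k :: nat where k: "a < 2 ^ k" using real_arch_pow[of 2 a] by auto
  define x1 where "x1 = max 1 (psi x0)"
  have "orlicz_inv psi (x powr a) \<le> C ^ k * orlicz_inv psi x" if x: "x1 \<le> x" for x
  proof -
    have x_ge: "1 \<le> x" "psi x0 \<le> x" using x by (auto simp: x1_def)
    define y where "y = orlicz_inv psi x"
    have y: "0 \<le> y" "psi y = x" using orlicz_inv[OF o, of x] x_ge by (auto simp: y_def)
    have "x0 \<le> y" using orlicz_le_iff[OF o, of x0 y] y x_ge C by simp
    have "x powr a \<le> x powr (2 ^ k)" using k x_ge by (intro powr_mono) auto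
    also have "\<dots> = psi y ^ (2 ^ k)" using powr_realpow[of x "2 ^ k"] x_ge y by simp
    also have "\<dots> \<le> psi (C ^ k * y)" using delta2_iterate[OF o C(1) _ D \<open>x0 \<le> y\<close>] C by simp
    finally show ?thesis
      using orlicz_inv_le_iff[OF o, of "x powr a" "C ^ k * y"] C y unfolding y_def by simp
  qed
  moreover have "0 < C ^ k" "0 < x1" using C by (auto simp: x1_def)
  ultimately show ?thesis unfolding inv_power_growth_def by blast
qed

section \<open>Comparison of the ratios\<close>

text \<open>Pointwise estimate: the plain ratio is controlled by the powered ratio
  (the growth bound applied to the denominator).\<close>
lemma ratio_le_powered_ratio:
  assumes o: "orlicz_function psi" and C: "C > 0" "\<And>x. x1 \<le> x \<Longrightarrow> orlicz_inv psi (x powr b) \<le> C * orlicz_inv psi x"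
    and b: "b > 1" and u: "1 \<le> u" and v: "1 \<le> v" "x1 \<le> v"
  shows "norm (orlicz_inv psi u / orlicz_inv psi v)
      \<le> C * (orlicz_inv psi (u powr b) / orlicz_inv psi (v powr b))"
proof -
  let ?I = "orlicz_inv psi"
  have Iu: "?I u > 0" and Iv: "?I v > 0" and Ivb: "?I (v powr b) > 0"
    using orlicz_inv_pos[OF o] u v by auto
  have "u \<le> u powr b" using powr_mono[of 1 b u] u b by simp
  then have Iub: "?I u \<le> ?I (u powr b)" using orlicz_inv_mono[OF o] u by auto
  have "?I (v powr b) / C \<le> ?I v" using C v by (simp add: divide_le_eq mult.commute)
  then have "?I u / ?I v \<le> ?I (u powr b) / (?I (v powr b) / C)"
    using Iub Iu Ivb C by (intro frac_le) auto
  also have "\<dots> = C * (?I (u powr b) / ?I (v powr b))" by simp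
  finally show ?thesis using Iu Iv by simp
qed

text \<open>Pointwise estimate in the other direction (the growth bound applied to the numerator);
  the additive term covers the case where u is below the threshold x1.\<close>
lemma powered_ratio_le_ratio:
  assumes o: "orlicz_function psi" and C: "C > 0" "\<And>x. x1 \<le> x \<Longrightarrow> orlicz_inv psi (x powr b) \<le> C * orlicz_inv psi x"
    and b: "b > 1" and u: "1 \<le> u" and v: "1 \<le> v" and x1: "x1 > 0"
  shows "norm (orlicz_inv psi (u powr b) / orlicz_inv psi (v powr b))
      \<le> orlicz_inv psi (x1 powr b) / orlicz_inv psi v + C * (orlicz_inv psi u / orlicz_inv psi v)"
proof -
  let ?I = "orlicz_inv psi"
  have Iu: "?I u > 0" and Iv: "?I v > 0" and Iub: "?I (u powr b) > 0" and K: "?I (x1 powr b) > 0"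
    using orlicz_inv_pos[OF o] u v x1 by auto
  have "v \<le> v powr b" using powr_mono[of 1 b v] v b by simp
  then have Ivb: "?I v \<le> ?I (v powr b)" using orlicz_inv_mono[OF o] v by auto
  have num: "?I (u powr b) \<le> ?I (x1 powr b) + C * ?I u"
  proof (cases "x1 \<le> u")
    case True then show ?thesis using C K by force
  next
    case False
    then have "?I (u powr b) \<le> ?I (x1 powr b)"
      using orlicz_inv_mono[OF o] u b by (simp add: powr_mono2)
    moreover have "0 < C * ?I u" using C Iu by simp
    ultimately show ?thesis by linarith
  qed
  have "norm (?I (u powr b) / ?I (v powr b)) \<le> (?I (x1 powr b) + C * ?I u) / ?I v"
    using num Iub Iv Ivb by (simp add: frac_le)
  then show ?thesis by (simp add: add_divide_distrib)
qed

lemma ratio_tendsto_zero_iff_powered: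
  assumes o: "orlicz_function psi" and g: "inv_power_growth psi b" and b: "b > 1"
    and u: "eventually (\<lambda>z. 1 \<le> u z) F" and v: "filterlim v at_top F"
  shows "((\<lambda>z. orlicz_inv psi (u z powr b) / orlicz_inv psi (v z powr b)) \<longlongrightarrow> 0) F
     \<longleftrightarrow> ((\<lambda>z. orlicz_inv psi (u z) / orlicz_inv psi (v z)) \<longlongrightarrow> 0) F"
proof -
  let ?I = "orlicz_inv psi"
  obtain C x1 where C: "C > 0" "x1 > 0" "\<And>x. x1 \<le> x \<Longrightarrow> ?I (x powr b) \<le> C * ?I x"
    using g unfolding inv_power_growth_def by blast
  have v_large: "eventually (\<lambda>z. max 1 x1 \<le> v z) F" using v unfolding filterlim_at_top by blast
  show ?thesis
  proof
    assume powered: "((\<lambda>z. ?I (u z powr b) / ?I (v z powr b)) \<longlongrightarrow> 0) F"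
    show "((\<lambda>z. ?I (u z) / ?I (v z)) \<longlongrightarrow> 0) F"
    proof (rule Lim_null_comparison)
      show "eventually (\<lambda>z. norm (?I (u z) / ?I (v z))
          \<le> C * (?I (u z powr b) / ?I (v z powr b))) F"
        using u v_large by eventually_elim (rule ratio_le_powered_ratio[OF o C(1) C(3) b], auto)
      show "((\<lambda>z. C * (?I (u z powr b) / ?I (v z powr b))) \<longlongrightarrow> 0) F"
        using tendsto_mult_right_zero[OF powered] .
    qed
  next
    assume plain: "((\<lambda>z. ?I (u z) / ?I (v z)) \<longlongrightarrow> 0) F"
    show "((\<lambda>z. ?I (u z powr b) / ?I (v z powr b)) \<longlongrightarrow> 0) F"
    proof (rule Lim_null_comparison)
      show "eventually (\<lambda>z. norm (?I (u z powr b) / ?I (v z powr b))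
          \<le> ?I (x1 powr b) / ?I (v z) + C * (?I (u z) / ?I (v z))) F"
        using u v_large by eventually_elim (rule powered_ratio_le_ratio[OF o C(1) C(3) b _ _ C(2)], auto)
      have "filterlim (\<lambda>z. ?I (v z)) at_top F"
        by (rule filterlim_compose[OF orlicz_inv_at_top[OF o] v])
      then have "((\<lambda>z. ?I (x1 powr b) / ?I (v z)) \<longlongrightarrow> 0) F"
        by (intro tendsto_divide_0[OF tendsto_const] filterlim_at_top_imp_at_infinity)
      then show "((\<lambda>z. ?I (x1 powr b) / ?I (v z) + C * (?I (u z) / ?I (v z))) \<longlongrightarrow> 0) F"
        using tendsto_add[OF _ tendsto_mult_right_zero[OF plain]] by simp
    qed
  qed
qed

section \<open>Boundary behaviour in the unit ball\<close>

lemma inverse_distance_to_sphere_at_top: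
  "filterlim (\<lambda>z. 1 / (1 - norm z)) at_top (filtercomap norm (at_left (1::real)))"
proof -
  have "((\<lambda>t::real. 1 - t) \<longlongrightarrow> 0) (at_left 1)"
    using tendsto_diff[OF tendsto_const[of "1::real"] tendsto_ident_at[of 1 "{..<1}"]] by simp
  moreover have "eventually (\<lambda>t::real. 0 < 1 - t) (at_left 1)"
    using eventually_at_left_real[of 0 "1::real"] by (rule eventually_mono) auto
  ultimately have "filterlim (\<lambda>t::real. inverse (1 - t)) at_top (at_left 1)"
    by (rule filterlim_inverse_at_top)
  then have "filterlim (\<lambda>t::real. 1 / (1 - t)) at_top (at_left 1)"
    by (simp add: inverse_eq_divide)
  then show ?thesis by (rule filterlim_compose[OF _ filterlim_filtercomap])
qed

lemma self_map_inverse_distance_ge_1: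
  fixes phi :: "'a::real_normed_vector \<Rightarrow> 'b::real_normed_vector"
  assumes "phi ` ball 0 1 \<subseteq> ball 0 1"
  shows "eventually (\<lambda>z. 1 \<le> 1 / (1 - norm (phi z))) (filtercomap norm (at_left (1::real)))"
proof -
  have "eventually (\<lambda>z::'a. norm z < 1) (filtercomap norm (at_left (1::real)))"
    using eventually_filtercomapI[OF eventually_at_left_real[of 0 "1::real"]]
    by (rule eventually_mono) auto
  then show ?thesis
  proof (rule eventually_mono)
    fix z :: 'a assume "norm z < 1"
    then have "z \<in> ball 0 1" by simp
    then have "phi z \<in> ball 0 1" using assms by blast
    then have "norm (phi z) < 1" by simp
    then show "1 \<le> 1 / (1 - norm (phi z))" by (simp add: le_divide_eq)
  qed
qed

theorem mainTheorem8:
  fixes psi :: "real \<Rightarrow> real"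
  assumes "orlicz_function psi" and "delta2_condition psi"
  shows "(\<forall>a>1. \<exists>C>0. \<exists>x1>0. \<forall>x\<ge>x1.
            orlicz_inv psi (x powr a) \<le> C * orlicz_inv psi x)
    \<and> (\<forall>(alpha::real) (phi :: complex ^ 'n \<Rightarrow> complex ^ 'n).
          alpha > -1 \<longrightarrow> holomorphic_vec_on phi (ball 0 1) \<longrightarrow> phi ` ball 0 1 \<subseteq> ball 0 1 \<longrightarrow>
          ((((\<lambda>z. orlicz_inv psi ((1 / (1 - norm (phi z))) powr (real CARD('n) + alpha + 1))
                 / orlicz_inv psi ((1 / (1 - norm z)) powr (real CARD('n) + alpha + 1)))
              \<longlongrightarrow> 0) (filtercomap norm (at_left 1)))
           \<longleftrightarrow>
           (((\<lambda>z. orlicz_inv psi (1 / (1 - norm (phi z))) / orlicz_inv psi (1 / (1 - norm z)))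
              \<longlongrightarrow> 0) (filtercomap norm (at_left 1)))))"
proof (intro conjI allI impI)
  fix a :: real assume "a > 1"
  then show "\<exists>C>0. \<exists>x1>0. \<forall>x\<ge>x1. orlicz_inv psi (x powr a) \<le> C * orlicz_inv psi x"
    using delta2_inv_power_growth[OF assms] unfolding inv_power_growth_def by blast
next
  fix alpha :: real and phi :: "complex ^ 'n \<Rightarrow> complex ^ 'n"
  assume "alpha > -1" and self_map: "phi ` ball 0 1 \<subseteq> ball 0 1"
  have "real CARD('n) \<ge> 1" by simp
  then have b: "real CARD('n) + alpha + 1 > 1" using \<open>alpha > -1\<close> by linarith
  show "(((\<lambda>z. orlicz_inv psi ((1 / (1 - norm (phi z))) powr (real CARD('n) + alpha + 1))
              / orlicz_inv psi ((1 / (1 - norm z)) powr (real CARD('n) + alpha + 1)))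
           \<longlongrightarrow> 0) (filtercomap norm (at_left 1)))
        \<longleftrightarrow> (((\<lambda>z. orlicz_inv psi (1 / (1 - norm (phi z))) / orlicz_inv psi (1 / (1 - norm z)))
           \<longlongrightarrow> 0) (filtercomap norm (at_left 1)))"
    by (rule ratio_tendsto_zero_iff_powered[OF assms(1) delta2_inv_power_growth[OF assms b] b
          self_map_inverse_distance_ge_1[OF self_map] inverse_distance_to_sphere_at_top])
qed

end
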